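(* Let $M$ be an $\aleph_0$-saturated model of a complete affine theory $T$. Then a function $f:M^n\to M$ is definable if and only if its graph $G_f=\{(\bar a,f(\bar a)):\bar a\in M^n\}$ is type-definable.
   Context: Affine continuous logic: $L$-structures are complete metric spaces $(M,d)$ with $d\le1$ and Lipschitz interpretations of function symbols and $[0,1]$-valued relation symbols. Affine formulas are built from $1$ and atomic formulas (including $d$) using only $r\cdot\phi$ ($r\in\mathbb R$), $\phi+\psi$, $\inf_x$, $\sup_x$. A condition is $\phi\le\psi$. $M$ is $\aleph_0$-saturated if every type over a finite subset of $M$ is realized in $M$. A predicate $P:M^m\to\mathbb R$ is definable (without parameters) if it is a uniform limit on $M^m$ of $\phi_k^M$ for affine formulas $\phi_k$. A function $f:M^n\to M^m$ is definable if the predicate $(\bar x,\bar y)\mapsto d(f(\bar x),\bar y)$ on $M^{n+m}$ is definable. A set $X\subseteq M^k$ is type-definable if it is the set of common solutions in $M$ of a family of conditions without parameters. *)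

theory Defs
  imports "HOL-Analysis.Analysis"
begin

text \<open>A language consists of function symbols of type 'f with arities fa
and relation symbols of type 'r with arities ra.  Variables are natural numbers.\<close>

datatype 'f aterm = Var nat | Fn 'f "'f aterm list"

datatype ('f, 'r) aformula =
    One
  | Rel 'r "'f aterm list"
  | Dist "'f aterm" "'f aterm"
  | Scale real "('f, 'r) aformula"
  | Add "('f, 'r) aformula" "('f, 'r) aformula"
  | Inf nat "('f, 'r) aformula"
  | Sup nat "('f, 'r) aformula"

fun wf_term :: "('f \<Rightarrow> nat) \<Rightarrow> 'f aterm \<Rightarrow> bool" where
  "wf_term fa (Var i) = True"
| "wf_term fa (Fn f ts) = (length ts = fa f \<and> (\<forall>t\<in>set ts. wf_term fa t))"

fun wf_formula :: "('f \<Rightarrow> nat) \<Rightarrow> ('r \<Rightarrow> nat) \<Rightarrow> ('f, 'r) aformula \<Rightarrow> bool" where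
  "wf_formula fa ra One = True"
| "wf_formula fa ra (Rel R ts) = (length ts = ra R \<and> (\<forall>t\<in>set ts. wf_term fa t))"
| "wf_formula fa ra (Dist t u) = (wf_term fa t \<and> wf_term fa u)"
| "wf_formula fa ra (Scale r \<phi>) = wf_formula fa ra \<phi>"
| "wf_formula fa ra (Add \<phi> \<psi>) = (wf_formula fa ra \<phi> \<and> wf_formula fa ra \<psi>)"
| "wf_formula fa ra (Inf x \<phi>) = wf_formula fa ra \<phi>"
| "wf_formula fa ra (Sup x \<phi>) = wf_formula fa ra \<phi>"

fun fv_term :: "'f aterm \<Rightarrow> nat set" where
  "fv_term (Var i) = {i}"
| "fv_term (Fn f ts) = (\<Union>t\<in>set ts. fv_term t)"

fun fv :: "('f, 'r) aformula \<Rightarrow> nat set" where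
  "fv One = {}"
| "fv (Rel R ts) = (\<Union>t\<in>set ts. fv_term t)"
| "fv (Dist t u) = fv_term t \<union> fv_term u"
| "fv (Scale r \<phi>) = fv \<phi>"
| "fv (Add \<phi> \<psi>) = fv \<phi> \<union> fv \<psi>"
| "fv (Inf x \<phi>) = fv \<phi> - {x}"
| "fv (Sup x \<phi>) = fv \<phi> - {x}"

record ('f, 'r, 'a) lstruct =
  univ :: "'a set"
  mdist :: "'a \<Rightarrow> 'a \<Rightarrow> real"
  fun_interp :: "'f \<Rightarrow> 'a list \<Rightarrow> 'a"
  rel_interp :: "'r \<Rightarrow> 'a list \<Rightarrow> real"

definition tuples :: "('f, 'r, 'a, 'b) lstruct_scheme \<Rightarrow> nat \<Rightarrow> 'a list set" where
  "tuples S m = {xs. length xs = m \<and> set xs \<subseteq> univ S}"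

definition tuple_dist :: "('f, 'r, 'a, 'b) lstruct_scheme \<Rightarrow> 'a list \<Rightarrow> 'a list \<Rightarrow> real" where
  "tuple_dist S xs ys = Max (insert 0 {mdist S (xs ! i) (ys ! i) | i. i < length xs})"

definition is_structure ::
  "('f \<Rightarrow> nat) \<Rightarrow> ('r \<Rightarrow> nat) \<Rightarrow> ('f, 'r, 'a, 'b) lstruct_scheme \<Rightarrow> bool" where
  "is_structure fa ra S \<longleftrightarrow>
     univ S \<noteq> {} \<and>
     Metric_space (univ S) (mdist S) \<and>
     Metric_space.mcomplete (univ S) (mdist S) \<and>
     (\<forall>x\<in>univ S. \<forall>y\<in>univ S. mdist S x y \<le> 1) \<and>
     (\<forall>f. (\<forall>xs\<in>tuples S (fa f). fun_interp S f xs \<in> univ S) \<and>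
          (\<exists>L. \<forall>xs\<in>tuples S (fa f). \<forall>ys\<in>tuples S (fa f).
                 mdist S (fun_interp S f xs) (fun_interp S f ys) \<le> L * tuple_dist S xs ys)) \<and>
     (\<forall>R. (\<forall>xs\<in>tuples S (ra R). 0 \<le> rel_interp S R xs \<and> rel_interp S R xs \<le> 1) \<and>
          (\<exists>L. \<forall>xs\<in>tuples S (ra R). \<forall>ys\<in>tuples S (ra R).
                 \<bar>rel_interp S R xs - rel_interp S R ys\<bar> \<le> L * tuple_dist S xs ys))"

fun teval :: "('f, 'r, 'a, 'b) lstruct_scheme \<Rightarrow> (nat \<Rightarrow> 'a) \<Rightarrow> 'f aterm \<Rightarrow> 'a" where
  "teval S \<sigma> (Var i) = \<sigma> i"
| "teval S \<sigma> (Fn f ts) = fun_interp S f (map (teval S \<sigma>) ts)"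

fun feval :: "('f, 'r, 'a, 'b) lstruct_scheme \<Rightarrow> (nat \<Rightarrow> 'a) \<Rightarrow> ('f, 'r) aformula \<Rightarrow> real" where
  "feval S \<sigma> One = 1"
| "feval S \<sigma> (Rel R ts) = rel_interp S R (map (teval S \<sigma>) ts)"
| "feval S \<sigma> (Dist t u) = mdist S (teval S \<sigma> t) (teval S \<sigma> u)"
| "feval S \<sigma> (Scale r \<phi>) = r * feval S \<sigma> \<phi>"
| "feval S \<sigma> (Add \<phi> \<psi>) = feval S \<sigma> \<phi> + feval S \<sigma> \<psi>"
| "feval S \<sigma> (Inf x \<phi>) = (INF a\<in>univ S. feval S (\<sigma>(x := a)) \<phi>)"
| "feval S \<sigma> (Sup x \<phi>) = (SUP a\<in>univ S. feval S (\<sigma>(x := a)) \<phi>)"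

definition asg :: "'a list \<Rightarrow> nat \<Rightarrow> 'a" where
  "asg xs = (\<lambda>i. xs ! i)"

text \<open>A condition is a pair (phi, psi), read as phi \<le> psi.\<close>
type_synonym ('f, 'r) condition = "('f, 'r) aformula \<times> ('f, 'r) aformula"

definition wf_condition :: "('f \<Rightarrow> nat) \<Rightarrow> ('r \<Rightarrow> nat) \<Rightarrow> nat \<Rightarrow> ('f, 'r) condition \<Rightarrow> bool" where
  "wf_condition fa ra k c \<longleftrightarrow>
     wf_formula fa ra (fst c) \<and> wf_formula fa ra (snd c) \<and> fv (fst c) \<union> fv (snd c) \<subseteq> {..<k}"

definition definable_pred ::
  "('f \<Rightarrow> nat) \<Rightarrow> ('r \<Rightarrow> nat) \<Rightarrow> ('f, 'r, 'a, 'b) lstruct_scheme \<Rightarrow> nat \<Rightarrow> ('a list \<Rightarrow> real) \<Rightarrow> bool" where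
  "definable_pred fa ra S m P \<longleftrightarrow>
     (\<exists>\<phi>s :: nat \<Rightarrow> ('f, 'r) aformula.
        (\<forall>k. wf_formula fa ra (\<phi>s k) \<and> fv (\<phi>s k) \<subseteq> {..<m}) \<and>
        (\<forall>\<epsilon>>0. \<exists>N. \<forall>k\<ge>N. \<forall>xs\<in>tuples S m. \<bar>feval S (asg xs) (\<phi>s k) - P xs\<bar> \<le> \<epsilon>))"

definition definable_fun ::
  "('f \<Rightarrow> nat) \<Rightarrow> ('r \<Rightarrow> nat) \<Rightarrow> ('f, 'r, 'a, 'b) lstruct_scheme \<Rightarrow> nat \<Rightarrow> ('a list \<Rightarrow> 'a) \<Rightarrow> bool" where
  "definable_fun fa ra S n f \<longleftrightarrow>
     definable_pred fa ra S (Suc n) (\<lambda>xs. mdist S (f (take n xs)) (xs ! n))"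

definition type_definable ::
  "('f \<Rightarrow> nat) \<Rightarrow> ('r \<Rightarrow> nat) \<Rightarrow> ('f, 'r, 'a, 'b) lstruct_scheme \<Rightarrow> nat \<Rightarrow> 'a list set \<Rightarrow> bool" where
  "type_definable fa ra S k X \<longleftrightarrow>
     (\<exists>\<Sigma> :: ('f, 'r) condition set.
        (\<forall>c\<in>\<Sigma>. wf_condition fa ra k c) \<and>
        X = {xs\<in>tuples S k. \<forall>c\<in>\<Sigma>. feval S (asg xs) (fst c) \<le> feval S (asg xs) (snd c)})"

text \<open>A set \<Sigma> of conditions in the variables 0..n-1 with parameters b (a finite
  tuple from M, assigned to the variables n..n+length b-1) is consistent with the
  affine theory of (M, b) iff no nonnegative combination of the conditions is
  refuted, i.e. for every finite \<Sigma>0 \<subseteq> \<Sigma> and weights \<lambda> \<ge> 0 the affine sentence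
  inf_x \<Sum> \<lambda>_i (\<phi>_i - \<psi>_i) has value \<le> 0 in M (affine compactness / Farkas).\<close>
definition affinely_consistent ::
  "('f, 'r, 'a, 'b) lstruct_scheme \<Rightarrow> nat \<Rightarrow> 'a list \<Rightarrow> ('f, 'r) condition set \<Rightarrow> bool" where
  "affinely_consistent S n b \<Sigma> \<longleftrightarrow>
     (\<forall>\<Sigma>0 w. finite \<Sigma>0 \<and> \<Sigma>0 \<subseteq> \<Sigma> \<and> (\<forall>c\<in>\<Sigma>0. 0 \<le> w c) \<longrightarrow>
        (INF xs\<in>tuples S n. \<Sum>c\<in>\<Sigma>0. w c * (feval S (asg (xs @ b)) (fst c) - feval S (asg (xs @ b)) (snd c))) \<le> 0)"

text \<open>M is \<aleph>0-saturated: every (partial, hence every complete) type in finitely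
  many variables over a finite set of parameters is realized in M.\<close>
definition aleph0_saturated ::
  "('f \<Rightarrow> nat) \<Rightarrow> ('r \<Rightarrow> nat) \<Rightarrow> ('f, 'r, 'a, 'b) lstruct_scheme \<Rightarrow> bool" where
  "aleph0_saturated fa ra S \<longleftrightarrow>
     (\<forall>n b \<Sigma>. set b \<subseteq> univ S \<and> (\<forall>c\<in>\<Sigma>. wf_condition fa ra (n + length b) c) \<and>
        affinely_consistent S n b \<Sigma> \<longrightarrow>
        (\<exists>xs\<in>tuples S n. \<forall>c\<in>\<Sigma>. feval S (asg (xs @ b)) (fst c) \<le> feval S (asg (xs @ b)) (snd c)))"

end

theory Submission
  imports Defs "HOL-Combinatorics.Transposition"
begin

text \<open>
  If \<open>f\<close> is definable, its graph is the zero set of the definable predicate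
  \<open>(x, y) \<mapsto> d(f x, y)\<close>, and the zero set of a nonnegative definable predicate \<open>P\<close> is cut
  out by the conditions \<open>\<phi> \<le> \<delta>\<close>, for all formulas \<open>\<phi>\<close> within \<open>\<delta>\<close> of \<open>P\<close>.

  Conversely, let \<open>\<Sigma>(x, y)\<close> define the graph. On the solutions of \<open>\<Sigma>(x, y) \<union> \<Sigma>(x, y')\<close>
  we have \<open>y = f x = y'\<close>, so adding \<open>\<epsilon> \<le> d(y, y')\<close> gives an unsolvable system. By
  saturation some finite nonnegative combination \<open>A(x, y) + R(x, y') + c (\<epsilon> - d(y, y'))\<close> of
  these conditions is positive everywhere, while \<open>A\<close> and \<open>R\<close> are nonpositive on the graph.
  Then \<open>c > 0\<close>, and the affine formula \<open>inf\<^sub>z (R(x, z) / c + d(z, y))\<close> is within \<open>\<epsilon>\<close>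
  of \<open>d(f x, y)\<close>.
\<close>

lemma structure_univ_nonempty: "is_structure fa ra S \<Longrightarrow> univ S \<noteq> {}"
  by (simp add: is_structure_def)

lemma structure_metric: "is_structure fa ra S \<Longrightarrow> Metric_space (univ S) (mdist S)"
  by (simp add: is_structure_def)

section \<open>Renaming, coincidence and boundedness of formulas\<close>

fun rename_term :: "(nat \<Rightarrow> nat) \<Rightarrow> 'f aterm \<Rightarrow> 'f aterm" where
  "rename_term h (Var i) = Var (h i)"
| "rename_term h (Fn g ts) = Fn g (map (rename_term h) ts)"

fun rename_formula :: "(nat \<Rightarrow> nat) \<Rightarrow> ('f, 'r) aformula \<Rightarrow> ('f, 'r) aformula" where
  "rename_formula h One = One"
| "rename_formula h (Rel R ts) = Rel R (map (rename_term h) ts)"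
| "rename_formula h (Dist t u) = Dist (rename_term h t) (rename_term h u)"
| "rename_formula h (Scale r \<phi>) = Scale r (rename_formula h \<phi>)"
| "rename_formula h (Add \<phi> \<psi>) = Add (rename_formula h \<phi>) (rename_formula h \<psi>)"
| "rename_formula h (Inf x \<phi>) = Inf (h x) (rename_formula h \<phi>)"
| "rename_formula h (Sup x \<phi>) = Sup (h x) (rename_formula h \<phi>)"

lemma teval_rename_term: "teval S \<sigma> (rename_term h t) = teval S (\<sigma> \<circ> h) t"
  by (induction t) (simp_all cong: map_cong)

lemma feval_rename_formula:
  assumes "inj h"
  shows "feval S \<sigma> (rename_formula h \<phi>) = feval S (\<sigma> \<circ> h) \<phi>"
proof (induction \<phi> arbitrary: \<sigma>)
  case (Inf x \<phi>)
  have "\<sigma>(h x := a) \<circ> h = (\<sigma> \<circ> h)(x := a)" for a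
    using assms by (auto simp: fun_eq_iff inj_eq)
  then show ?case by (simp only: feval.simps rename_formula.simps Inf.IH)
next
  case (Sup x \<phi>)
  have "\<sigma>(h x := a) \<circ> h = (\<sigma> \<circ> h)(x := a)" for a
    using assms by (auto simp: fun_eq_iff inj_eq)
  then show ?case by (simp only: feval.simps rename_formula.simps Sup.IH)
qed (simp_all add: teval_rename_term comp_def)

lemma fv_rename_term: "fv_term (rename_term h t) = h ` fv_term t"
  by (induction t) auto

lemma fv_rename_formula: "inj h \<Longrightarrow> fv (rename_formula h \<phi>) = h ` fv \<phi>"
  by (induction \<phi>) (auto simp: fv_rename_term image_set_diff image_Union)

lemma wf_rename_term: "wf_term fa (rename_term h t) = wf_term fa t"
  by (induction t) auto

lemma wf_rename_formula: "wf_formula fa ra (rename_formula h \<phi>) = wf_formula fa ra \<phi>"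
  by (induction \<phi>) (auto simp: wf_rename_term)

lemma teval_cong: "(\<And>i. i \<in> fv_term t \<Longrightarrow> \<sigma> i = \<tau> i) \<Longrightarrow> teval S \<sigma> t = teval S \<tau> t"
proof (induction t)
  case (Fn g ts)
  have "teval S \<sigma> t = teval S \<tau> t" if "t \<in> set ts" for t
    using that Fn.prems by (intro Fn.IH) auto
  then have "map (teval S \<sigma>) ts = map (teval S \<tau>) ts"
    by (rule map_cong[OF refl])
  then show ?case by (simp del: map_eq_conv)
qed simp

lemma feval_cong: "(\<And>i. i \<in> fv \<phi> \<Longrightarrow> \<sigma> i = \<tau> i) \<Longrightarrow> feval S \<sigma> \<phi> = feval S \<tau> \<phi>"
proof (induction \<phi> arbitrary: \<sigma> \<tau>)
  case (Rel R ts)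
  have "teval S \<sigma> t = teval S \<tau> t" if "t \<in> set ts" for t
    using that Rel by (intro teval_cong) auto
  then have "map (teval S \<sigma>) ts = map (teval S \<tau>) ts"
    by (rule map_cong[OF refl])
  then show ?case by (simp del: map_eq_conv)
next
  case (Dist t u)
  then have "teval S \<sigma> t = teval S \<tau> t" "teval S \<sigma> u = teval S \<tau> u"
    by (auto intro!: teval_cong)
  then show ?case by simp
next
  case (Scale r \<phi>)
  have "feval S \<sigma> \<phi> = feval S \<tau> \<phi>"
    using Scale.prems by (intro Scale.IH) simp
  then show ?case by simp
next
  case (Add \<phi> \<psi>)
  have "feval S \<sigma> \<phi> = feval S \<tau> \<phi>" "feval S \<sigma> \<psi> = feval S \<tau> \<psi>"
    using Add.prems by (intro Add.IH; simp)+
  then show ?case by simp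
next
  case (Inf x \<phi>)
  have "feval S (\<sigma>(x := a)) \<phi> = feval S (\<tau>(x := a)) \<phi>" for a
    using Inf.prems by (intro Inf.IH) auto
  then show ?case by simp
next
  case (Sup x \<phi>)
  have "feval S (\<sigma>(x := a)) \<phi> = feval S (\<tau>(x := a)) \<phi>" for a
    using Sup.prems by (intro Sup.IH) auto
  then show ?case by simp
qed simp

lemma teval_in_univ:
  assumes "is_structure fa ra S" "wf_term fa t" "\<And>i. i \<in> fv_term t \<Longrightarrow> \<sigma> i \<in> univ S"
  shows "teval S \<sigma> t \<in> univ S"
  using assms(2,3)
proof (induction t)
  case (Fn g ts)
  then have "map (teval S \<sigma>) ts \<in> tuples S (fa g)"
    by (auto simp: tuples_def)
  then show ?case using assms(1) by (simp add: is_structure_def)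
qed simp

fun formula_bound :: "('f, 'r) aformula \<Rightarrow> real" where
  "formula_bound (Scale r \<phi>) = \<bar>r\<bar> * formula_bound \<phi>"
| "formula_bound (Add \<phi> \<psi>) = formula_bound \<phi> + formula_bound \<psi>"
| "formula_bound (Inf x \<phi>) = formula_bound \<phi>"
| "formula_bound (Sup x \<phi>) = formula_bound \<phi>"
| "formula_bound _ = 1"

lemma abs_INF_le:
  fixes g :: "'a \<Rightarrow> real"
  assumes "A \<noteq> {}" "\<And>a. a \<in> A \<Longrightarrow> \<bar>g a\<bar> \<le> B"
  shows "\<bar>INF a\<in>A. g a\<bar> \<le> B"
proof -
  have bounds: "- B \<le> g a" "g a \<le> B" if "a \<in> A" for a
    using assms(2)[OF that] by (simp_all add: abs_le_iff)
  obtain a where "a \<in> A" using assms(1) by blast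
  have "bdd_below (g ` A)"
    using bounds by (intro bdd_belowI2[where m = "- B"])
  then have "(INF a\<in>A. g a) \<le> B"
    using \<open>a \<in> A\<close> bounds by (meson cINF_lower order_trans)
  moreover have "- B \<le> (INF a\<in>A. g a)"
    using assms(1) bounds by (intro cINF_greatest)
  ultimately show ?thesis by simp
qed

lemma abs_SUP_le:
  fixes g :: "'a \<Rightarrow> real"
  assumes "A \<noteq> {}" "\<And>a. a \<in> A \<Longrightarrow> \<bar>g a\<bar> \<le> B"
  shows "\<bar>SUP a\<in>A. g a\<bar> \<le> B"
proof -
  have bounds: "- B \<le> g a" "g a \<le> B" if "a \<in> A" for a
    using assms(2)[OF that] by (simp_all add: abs_le_iff)
  obtain a where "a \<in> A" using assms(1) by blast
  have "bdd_above (g ` A)"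
    using bounds by (intro bdd_aboveI2[where M = B])
  then have "- B \<le> (SUP a\<in>A. g a)"
    using \<open>a \<in> A\<close> bounds by (meson cSUP_upper order_trans)
  moreover have "(SUP a\<in>A. g a) \<le> B"
    using assms(1) bounds by (intro cSUP_least)
  ultimately show ?thesis by simp
qed

lemma abs_feval_le_formula_bound:
  assumes S: "is_structure fa ra S"
  shows "wf_formula fa ra \<phi> \<Longrightarrow> (\<And>i. i \<in> fv \<phi> \<Longrightarrow> \<sigma> i \<in> univ S) \<Longrightarrow>
    \<bar>feval S \<sigma> \<phi>\<bar> \<le> formula_bound \<phi>"
proof (induction \<phi> arbitrary: \<sigma>)
  case (Rel R ts)
  have "teval S \<sigma> t \<in> univ S" if "t \<in> set ts" for t
    using Rel that by (intro teval_in_univ[OF S]) auto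
  then have "map (teval S \<sigma>) ts \<in> tuples S (ra R)"
    using Rel by (auto simp: tuples_def)
  moreover have "\<forall>xs\<in>tuples S (ra R). 0 \<le> rel_interp S R xs \<and> rel_interp S R xs \<le> 1"
    using S by (simp add: is_structure_def)
  ultimately show ?case by simp
next
  case (Dist t u)
  then have "teval S \<sigma> t \<in> univ S" "teval S \<sigma> u \<in> univ S"
    using teval_in_univ[OF S] by auto
  moreover have "\<forall>x\<in>univ S. \<forall>y\<in>univ S. mdist S x y \<le> 1"
    using S by (simp add: is_structure_def)
  ultimately show ?case by (simp add: Metric_space.nonneg[OF structure_metric[OF S]])
next
  case (Scale r \<phi>)
  then show ?case by (auto simp: abs_mult intro: mult_left_mono)
next
  case (Add \<phi> \<psi>)
  then have "\<bar>feval S \<sigma> \<phi>\<bar> \<le> formula_bound \<phi>" "\<bar>feval S \<sigma> \<psi>\<bar> \<le> formula_bound \<psi>"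
    by auto
  then show ?case by (simp add: order_trans[OF abs_triangle_ineq add_mono])
next
  case (Inf x \<phi>)
  have "\<bar>feval S (\<sigma>(x := a)) \<phi>\<bar> \<le> formula_bound \<phi>" if "a \<in> univ S" for a
    using that Inf.prems by (intro Inf.IH) auto
  then show ?case using structure_univ_nonempty[OF S] by (simp add: abs_INF_le)
next
  case (Sup x \<phi>)
  have "\<bar>feval S (\<sigma>(x := a)) \<phi>\<bar> \<le> formula_bound \<phi>" if "a \<in> univ S" for a
    using that Sup.prems by (intro Sup.IH) auto
  then show ?case using structure_univ_nonempty[OF S] by (simp add: abs_SUP_le)
qed simp

section \<open>Conditions and saturation\<close>

lemma tuples_Suc: "tuples S (Suc n) = {xs @ [y] | xs y. xs \<in> tuples S n \<and> y \<in> univ S}"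
proof (intro equalityI subsetI)
  fix zs assume zs: "zs \<in> tuples S (Suc n)"
  then have "zs \<noteq> []"
    by (auto simp: tuples_def)
  then obtain xs y where "zs = xs @ [y]"
    by (cases zs rule: rev_cases) auto
  with zs show "zs \<in> {xs @ [y] | xs y. xs \<in> tuples S n \<and> y \<in> univ S}"
    by (auto simp: tuples_def)
qed (auto simp: tuples_def)

lemma tuples_nonempty: "univ S \<noteq> {} \<Longrightarrow> tuples S n \<noteq> {}"
proof -
  assume "univ S \<noteq> {}"
  then obtain a where "a \<in> univ S" by blast
  then have "replicate n a \<in> tuples S n" by (simp add: tuples_def set_replicate_conv_if)
  then show ?thesis by blast
qed

lemma asg_append: "i < length xs \<Longrightarrow> asg (xs @ ys) i = asg xs i"
  by (simp add: asg_def nth_append)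

lemma asg_append_swap:
  assumes "length xs = n"
  shows "asg (xs @ [y, z]) \<circ> Transposition.transpose n (Suc n) = asg (xs @ [z, y])"
proof
  fix i
  consider "i < n" | "i = n" | "i = Suc n" | "Suc n < i"
    by linarith
  then show "(asg (xs @ [y, z]) \<circ> Transposition.transpose n (Suc n)) i = asg (xs @ [z, y]) i"
    using assms by cases (auto simp: asg_def nth_append nth_Cons')
qed

definition violation :: "('f, 'r, 'a, 'b) lstruct_scheme \<Rightarrow> (nat \<Rightarrow> 'a) \<Rightarrow> ('f, 'r) condition \<Rightarrow> real" where
  "violation S \<sigma> c = feval S \<sigma> (fst c) - feval S \<sigma> (snd c)"

definition cond_vars :: "('f, 'r) condition \<Rightarrow> nat set" where
  "cond_vars c = fv (fst c) \<union> fv (snd c)"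

definition rename_cond :: "(nat \<Rightarrow> nat) \<Rightarrow> ('f, 'r) condition \<Rightarrow> ('f, 'r) condition" where
  "rename_cond h c = (rename_formula h (fst c), rename_formula h (snd c))"

definition solutions ::
  "('f, 'r, 'a, 'b) lstruct_scheme \<Rightarrow> nat \<Rightarrow> ('f, 'r) condition set \<Rightarrow> 'a list set" where
  "solutions S k \<Sigma> = {xs \<in> tuples S k. \<forall>c\<in>\<Sigma>. violation S (asg xs) c \<le> 0}"

lemma type_definable_iff_solutions:
  "type_definable fa ra S k X \<longleftrightarrow> (\<exists>\<Sigma>. (\<forall>c\<in>\<Sigma>. wf_condition fa ra k c) \<and> X = solutions S k \<Sigma>)"
  by (simp add: type_definable_def solutions_def violation_def)

lemma wf_condition_iff:
  "wf_condition fa ra k c \<longleftrightarrow>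
     wf_formula fa ra (fst c) \<and> wf_formula fa ra (snd c) \<and> cond_vars c \<subseteq> {..<k}"
  by (simp add: wf_condition_def cond_vars_def)

lemma violation_cong:
  assumes "\<And>i. i \<in> cond_vars c \<Longrightarrow> \<sigma> i = \<tau> i"
  shows "violation S \<sigma> c = violation S \<tau> c"
proof -
  have "feval S \<sigma> (fst c) = feval S \<tau> (fst c)" "feval S \<sigma> (snd c) = feval S \<tau> (snd c)"
    using assms by (intro feval_cong; simp add: cond_vars_def)+
  then show ?thesis by (simp add: violation_def)
qed

lemma violation_asg_append:
  "cond_vars c \<subseteq> {..<length xs} \<Longrightarrow> violation S (asg (xs @ ys)) c = violation S (asg xs) c"
  by (rule violation_cong) (auto simp: asg_append)

lemma violation_rename_cond: "inj h \<Longrightarrow> violation S \<sigma> (rename_cond h c) = violation S (\<sigma> \<circ> h) c"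
  by (simp add: violation_def rename_cond_def feval_rename_formula)

lemma cond_vars_rename_cond: "inj h \<Longrightarrow> cond_vars (rename_cond h c) = h ` cond_vars c"
  by (simp add: cond_vars_def rename_cond_def fv_rename_formula image_Un)

lemma wf_condition_rename_cond:
  assumes "wf_condition fa ra k c" "inj h" "h ` {..<k} \<subseteq> {..<k'}"
  shows "wf_condition fa ra k' (rename_cond h c)"
  using assms by (auto simp: wf_condition_iff cond_vars_rename_cond)
    (auto simp: rename_cond_def wf_rename_formula)

lemma violation_swapped:
  assumes "length xs = n" "cond_vars c \<subseteq> {..<Suc n}"
  shows "violation S (asg (xs @ [y, z])) (rename_cond (Transposition.transpose n (Suc n)) c) =
    violation S (asg (xs @ [z])) c"
proof -
  have "violation S (asg (xs @ [y, z])) (rename_cond (Transposition.transpose n (Suc n)) c) =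
      violation S (asg ((xs @ [z]) @ [y])) c"
    using assms(1) by (simp add: violation_rename_cond inj_transpose asg_append_swap)
  also have "\<dots> = violation S (asg (xs @ [z])) c"
    using assms by (intro violation_asg_append) auto
  finally show ?thesis .
qed

lemma cond_vars_swapped:
  "cond_vars c \<subseteq> {..<Suc n} \<Longrightarrow>
    cond_vars (rename_cond (Transposition.transpose n (Suc n)) c) \<subseteq> insert (Suc n) {..<n}"
  by (auto simp: cond_vars_rename_cond inj_transpose Transposition.transpose_def)

lemma violation_cong_swapped:
  assumes "cond_vars c \<subseteq> insert (Suc n) {..<n}" "length xs = n"
  shows "violation S (asg (xs @ [y, z])) c = violation S (asg (xs @ [y', z])) c"
  using assms by (intro violation_cong) (auto simp: asg_def nth_append)

lemma violation_lower_bound: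
  assumes S: "is_structure fa ra S" and c: "wf_condition fa ra k c" and xs: "xs \<in> tuples S k"
  shows "- (formula_bound (fst c) + formula_bound (snd c)) \<le> violation S (asg xs) c"
proof -
  have "asg xs i \<in> univ S" if "i \<in> cond_vars c" for i
  proof -
    have "i < length xs"
      using that c xs by (auto simp: wf_condition_iff tuples_def)
    then show ?thesis
      using xs nth_mem by (fastforce simp: tuples_def asg_def)
  qed
  then have "\<bar>feval S (asg xs) (fst c)\<bar> \<le> formula_bound (fst c)"
    "\<bar>feval S (asg xs) (snd c)\<bar> \<le> formula_bound (snd c)"
    using c by (intro abs_feval_le_formula_bound[OF S]; simp add: wf_condition_iff cond_vars_def)+
  then show ?thesis by (simp add: violation_def abs_le_iff)
qed

lemma saturated_refutation:
  assumes S: "is_structure fa ra S" and sat: "aleph0_saturated fa ra S"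
    and wf: "\<forall>c\<in>\<Sigma>. wf_condition fa ra k c" and unsolvable: "solutions S k \<Sigma> = {}"
  obtains \<Sigma>0 w where "finite \<Sigma>0" "\<Sigma>0 \<subseteq> \<Sigma>" "\<forall>c\<in>\<Sigma>0. 0 \<le> w c"
    "\<And>xs. xs \<in> tuples S k \<Longrightarrow> 0 < (\<Sum>c\<in>\<Sigma>0. w c * violation S (asg xs) c)"
proof -
  have "\<exists>xs\<in>tuples S k. \<forall>c\<in>\<Sigma>. feval S (asg xs) (fst c) \<le> feval S (asg xs) (snd c)"
    if "affinely_consistent S k [] \<Sigma>"
    using sat[unfolded aleph0_saturated_def, rule_format, where n = k and b = "[]" and \<Sigma> = \<Sigma>]
      that wf by simp
  then have "\<not> affinely_consistent S k [] \<Sigma>"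
    using unsolvable by (auto simp: solutions_def violation_def)
  then obtain \<Sigma>0 w where fin: "finite \<Sigma>0" and sub: "\<Sigma>0 \<subseteq> \<Sigma>" and w: "\<forall>c\<in>\<Sigma>0. 0 \<le> w c"
    and inf_pos: "\<not> (INF xs\<in>tuples S k. \<Sum>c\<in>\<Sigma>0. w c * violation S (asg xs) c) \<le> 0"
    unfolding affinely_consistent_def violation_def by auto
  \<comment> \<open>A real \<open>INF\<close> of a set unbounded below is junk, so positivity at each tuple needs
    the uniform lower bound \<open>- B\<close>.\<close>
  define B where "B = (\<Sum>c\<in>\<Sigma>0. w c * (formula_bound (fst c) + formula_bound (snd c)))"
  have "- B \<le> (\<Sum>c\<in>\<Sigma>0. w c * violation S (asg xs) c)" if xs: "xs \<in> tuples S k" for xs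
  proof -
    have "w c * - (formula_bound (fst c) + formula_bound (snd c)) \<le> w c * violation S (asg xs) c"
      if "c \<in> \<Sigma>0" for c
      using that sub w wf by (intro mult_left_mono violation_lower_bound[OF S _ xs]) auto
    then show ?thesis
      unfolding B_def sum_negf[symmetric] by (intro sum_mono) (simp add: algebra_simps)
  qed
  then have "bdd_below ((\<lambda>xs. \<Sum>c\<in>\<Sigma>0. w c * violation S (asg xs) c) ` tuples S k)"
    by (rule bdd_belowI2)
  then have "0 < (\<Sum>c\<in>\<Sigma>0. w c * violation S (asg xs) c)" if "xs \<in> tuples S k" for xs
    using that inf_pos cINF_lower by (meson dual_order.trans linorder_not_le)
  with fin sub w show ?thesis by (rule that)
qed

section \<open>The doubled graph\<close>

lemma graph_solution_iff:
  assumes graph: "solutions S (Suc n) \<Sigma> = {xs @ [f xs] | xs. xs \<in> tuples S n}"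
    and xs: "xs \<in> tuples S n" and y: "y \<in> univ S"
  shows "(\<forall>c\<in>\<Sigma>. violation S (asg (xs @ [y])) c \<le> 0) \<longleftrightarrow> y = f xs"
proof -
  have "xs @ [y] \<in> tuples S (Suc n)"
    using xs y by (auto simp: tuples_def)
  then have "(\<forall>c\<in>\<Sigma>. violation S (asg (xs @ [y])) c \<le> 0) \<longleftrightarrow>
      xs @ [y] \<in> {xs @ [f xs] | xs. xs \<in> tuples S n}"
    by (simp add: graph[symmetric] solutions_def)
  also have "\<dots> \<longleftrightarrow> y = f xs"
    using xs by (auto simp: tuples_def)
  finally show ?thesis .
qed

text \<open>For \<open>\<Sigma>(x, y)\<close> in the variables \<open>0..n\<close>, \<open>doubled_conditions n \<Sigma>\<close> is
  \<open>\<Sigma>(x, y) \<union> \<Sigma>(x, y')\<close>, where \<open>y'\<close> is the variable \<open>n + 1\<close>.\<close>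

definition doubled_conditions :: "nat \<Rightarrow> ('f, 'r) condition set \<Rightarrow> ('f, 'r) condition set" where
  "doubled_conditions n \<Sigma> = \<Sigma> \<union> rename_cond (Transposition.transpose n (Suc n)) ` \<Sigma>"

definition apart_condition :: "nat \<Rightarrow> real \<Rightarrow> ('f, 'r) condition" where
  "apart_condition n \<epsilon> = (Scale \<epsilon> One, Dist (Var n) (Var (Suc n)))"

lemma wf_doubled_conditions:
  assumes wf: "\<forall>c\<in>\<Sigma>. wf_condition fa ra (Suc n) c"
  shows "\<forall>c\<in>insert (apart_condition n \<epsilon>) (doubled_conditions n \<Sigma>). wf_condition fa ra (Suc (Suc n)) c"
proof -
  have "wf_condition fa ra (Suc (Suc n)) (rename_cond (Transposition.transpose n (Suc n)) c)"
    if "c \<in> \<Sigma>" for c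
    using wf that by (intro wf_condition_rename_cond)
      (auto simp: inj_transpose Transposition.transpose_def)
  moreover have "wf_condition fa ra (Suc (Suc n)) c" if "c \<in> \<Sigma>" for c
    using wf that by (fastforce simp: wf_condition_iff)
  moreover have "wf_condition fa ra (Suc (Suc n)) (apart_condition n \<epsilon>)"
    by (simp add: apart_condition_def wf_condition_def)
  ultimately show ?thesis
    by (auto simp: doubled_conditions_def)
qed

lemma doubled_graph_solution_iff:
  assumes graph: "solutions S (Suc n) \<Sigma> = {xs @ [f xs] | xs. xs \<in> tuples S n}"
    and vars: "\<forall>c\<in>\<Sigma>. cond_vars c \<subseteq> {..<Suc n}"
    and xs: "xs \<in> tuples S n" and y: "y \<in> univ S" and z: "z \<in> univ S"
  shows "(\<forall>c\<in>doubled_conditions n \<Sigma>. violation S (asg (xs @ [y, z])) c \<le> 0) \<longleftrightarrow>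
    y = f xs \<and> z = f xs"
proof -
  have len: "length xs = n"
    using xs by (simp add: tuples_def)
  have "violation S (asg ((xs @ [y]) @ [z])) c = violation S (asg (xs @ [y])) c" if "c \<in> \<Sigma>" for c
    using vars that len by (intro violation_asg_append) auto
  moreover have "violation S (asg (xs @ [y, z])) (rename_cond (Transposition.transpose n (Suc n)) c) =
      violation S (asg (xs @ [z])) c" if "c \<in> \<Sigma>" for c
    using vars that len by (intro violation_swapped) auto
  ultimately have "(\<forall>c\<in>doubled_conditions n \<Sigma>. violation S (asg (xs @ [y, z])) c \<le> 0) \<longleftrightarrow>
    (\<forall>c\<in>\<Sigma>. violation S (asg (xs @ [y])) c \<le> 0) \<and> (\<forall>c\<in>\<Sigma>. violation S (asg (xs @ [z])) c \<le> 0)"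
    by (simp add: doubled_conditions_def ball_Un cong: ball_cong)
  then show ?thesis
    using graph_solution_iff[OF graph xs y] graph_solution_iff[OF graph xs z] by simp
qed

lemma doubled_graph_apart_unsolvable:
  assumes S: "is_structure fa ra S"
    and graph: "solutions S (Suc n) \<Sigma> = {xs @ [f xs] | xs. xs \<in> tuples S n}"
    and vars: "\<forall>c\<in>\<Sigma>. cond_vars c \<subseteq> {..<Suc n}" and "0 < \<epsilon>"
  shows "solutions S (Suc (Suc n)) (insert (apart_condition n \<epsilon>) (doubled_conditions n \<Sigma>)) = {}"
proof (rule equals0I)
  fix zs
  assume sol: "zs \<in> solutions S (Suc (Suc n)) (insert (apart_condition n \<epsilon>) (doubled_conditions n \<Sigma>))"
  then have "zs \<in> tuples S (Suc (Suc n))"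
    by (simp add: solutions_def)
  then obtain xs y z where zs: "zs = xs @ [y, z]"
    and xs: "xs \<in> tuples S n" and y: "y \<in> univ S" and z: "z \<in> univ S"
    unfolding tuples_Suc by auto
  have "y = f xs \<and> z = f xs"
    using sol doubled_graph_solution_iff[OF graph vars xs y z] by (simp add: solutions_def zs)
  then have "mdist S y z = 0"
    using y Metric_space.zero[OF structure_metric[OF S]] by simp
  moreover have "length xs = n"
    using xs by (simp add: tuples_def)
  then have "\<epsilon> - mdist S y z \<le> 0"
    using sol by (simp add: zs solutions_def violation_def apart_condition_def asg_def nth_append)
  ultimately show False
    using \<open>0 < \<epsilon>\<close> by simp
qed

lemma sum_split_Int_Diff_point:
  assumes "finite A" "c \<notin> B"
  shows "sum g A = sum g (A \<inter> B) + sum g (A - B - {c}) + (if c \<in> A then g c else 0)"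
proof -
  have "sum g A = sum g (A \<inter> B) + sum g (A - B)"
    using assms(1) by (rule sum.Int_Diff)
  also have "sum g (A - B) = sum g (A - B - {c}) + (if c \<in> A then g c else 0)"
  proof (cases "c \<in> A")
    case True
    then show ?thesis
      using assms by (simp add: sum.remove[of "A - B" c] add.commute)
  next
    case False
    then have "A - B - {c} = A - B" by blast
    then show ?thesis using False by simp
  qed
  finally show ?thesis by (simp only: add.assoc)
qed

lemma doubled_combination_split:
  assumes fin: "finite \<Sigma>0" and sub: "\<Sigma>0 \<subseteq> insert (apart_condition n \<epsilon>) (doubled_conditions n \<Sigma>)"
    and vars: "\<forall>c\<in>\<Sigma>. cond_vars c \<subseteq> {..<Suc n}" and len: "length xs = n"
  shows "(\<Sum>c\<in>\<Sigma>0. w c * violation S (asg (xs @ [y, z])) c) =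
    (\<Sum>c\<in>\<Sigma>0 \<inter> \<Sigma>. w c * violation S (asg (xs @ [y])) c) +
    (\<Sum>c\<in>\<Sigma>0 - \<Sigma> - {apart_condition n \<epsilon>}. w c * violation S (asg (xs @ [z, z])) c) +
    (if apart_condition n \<epsilon> \<in> \<Sigma>0 then w (apart_condition n \<epsilon>) else 0) * (\<epsilon> - mdist S y z)"
proof -
  let ?a = "apart_condition n \<epsilon>"
  let ?v = "\<lambda>c. w c * violation S (asg (xs @ [y, z])) c"
  have "?a \<notin> \<Sigma>"
    using vars by (auto simp: apart_condition_def cond_vars_def)
  with fin have "sum ?v \<Sigma>0 = sum ?v (\<Sigma>0 \<inter> \<Sigma>) + sum ?v (\<Sigma>0 - \<Sigma> - {?a}) + (if ?a \<in> \<Sigma>0 then ?v ?a else 0)"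
    by (rule sum_split_Int_Diff_point)
  moreover have "violation S (asg (xs @ [y, z])) c = violation S (asg (xs @ [y])) c" if "c \<in> \<Sigma>" for c
    using violation_asg_append[of c "xs @ [y]" S "[z]"] vars that len by simp
  then have "sum ?v (\<Sigma>0 \<inter> \<Sigma>) = (\<Sum>c\<in>\<Sigma>0 \<inter> \<Sigma>. w c * violation S (asg (xs @ [y])) c)"
    by (intro sum.cong) auto
  moreover have "violation S (asg (xs @ [y, z])) c = violation S (asg (xs @ [z, z])) c"
    if c: "c \<in> \<Sigma>0 - \<Sigma> - {?a}" for c
  proof -
    obtain d where "d \<in> \<Sigma>" "c = rename_cond (Transposition.transpose n (Suc n)) d"
      using sub c by (auto simp: doubled_conditions_def)
    then have "cond_vars c \<subseteq> insert (Suc n) {..<n}"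
      using vars cond_vars_swapped by blast
    then show ?thesis
      using len by (rule violation_cong_swapped)
  qed
  then have "sum ?v (\<Sigma>0 - \<Sigma> - {?a}) = (\<Sum>c\<in>\<Sigma>0 - \<Sigma> - {?a}. w c * violation S (asg (xs @ [z, z])) c)"
    by (intro sum.cong) auto
  moreover have "(if ?a \<in> \<Sigma>0 then ?v ?a else 0) = (if ?a \<in> \<Sigma>0 then w ?a else 0) * (\<epsilon> - mdist S y z)"
    using len by (simp add: violation_def apart_condition_def asg_def nth_append)
  ultimately show ?thesis
    by linarith
qed

lemma graph_separation:
  assumes S: "is_structure fa ra S" and sat: "aleph0_saturated fa ra S"
    and wf: "\<forall>c\<in>\<Sigma>. wf_condition fa ra (Suc n) c"
    and graph: "solutions S (Suc n) \<Sigma> = {xs @ [f xs] | xs. xs \<in> tuples S n}"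
    and "0 < \<epsilon>"
  obtains A C w c0 where "finite C" "C \<subseteq> rename_cond (Transposition.transpose n (Suc n)) ` \<Sigma>"
    "\<forall>c\<in>C. 0 \<le> w c" "0 \<le> c0"
    "\<And>xs. xs \<in> tuples S n \<Longrightarrow> A xs (f xs) \<le> 0"
    "\<And>xs y z. xs \<in> tuples S n \<Longrightarrow> y \<in> univ S \<Longrightarrow> z \<in> univ S \<Longrightarrow>
       0 < A xs y + (\<Sum>c\<in>C. w c * violation S (asg (xs @ [z, z])) c) + c0 * (\<epsilon> - mdist S y z)"
proof -
  let ?a = "apart_condition n \<epsilon>"
  have vars: "\<forall>c\<in>\<Sigma>. cond_vars c \<subseteq> {..<Suc n}"
    using wf by (simp add: wf_condition_iff)
  obtain \<Sigma>0 w where fin: "finite \<Sigma>0" and sub: "\<Sigma>0 \<subseteq> insert ?a (doubled_conditions n \<Sigma>)"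
    and w: "\<forall>c\<in>\<Sigma>0. 0 \<le> w c"
    and pos: "\<And>zs. zs \<in> tuples S (Suc (Suc n)) \<Longrightarrow> 0 < (\<Sum>c\<in>\<Sigma>0. w c * violation S (asg zs) c)"
    by (rule saturated_refutation[OF S sat wf_doubled_conditions[OF wf]
          doubled_graph_apart_unsolvable[OF S graph vars \<open>0 < \<epsilon>\<close>]]) blast
  define A where "A xs y = (\<Sum>c\<in>\<Sigma>0 \<inter> \<Sigma>. w c * violation S (asg (xs @ [y])) c)" for xs y
  show ?thesis
  proof (rule that[of "\<Sigma>0 - \<Sigma> - {?a}" w "if ?a \<in> \<Sigma>0 then w ?a else 0" A])
    show "finite (\<Sigma>0 - \<Sigma> - {?a})"
      using fin by simp
    show "\<Sigma>0 - \<Sigma> - {?a} \<subseteq> rename_cond (Transposition.transpose n (Suc n)) ` \<Sigma>"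
      using sub by (auto simp: doubled_conditions_def)
    show "\<forall>c\<in>\<Sigma>0 - \<Sigma> - {?a}. 0 \<le> w c" "0 \<le> (if ?a \<in> \<Sigma>0 then w ?a else 0)"
      using w by simp_all
    show "A xs (f xs) \<le> 0" if "xs \<in> tuples S n" for xs
    proof -
      have "xs @ [f xs] \<in> solutions S (Suc n) \<Sigma>"
        using graph that by blast
      then show ?thesis
        unfolding A_def using w by (intro sum_nonpos mult_nonneg_nonpos) (auto simp: solutions_def)
    qed
    fix xs y z
    assume "xs \<in> tuples S n" "y \<in> univ S" "z \<in> univ S"
    then have len: "length xs = n" and zs: "xs @ [y, z] \<in> tuples S (Suc (Suc n))"
      by (auto simp: tuples_def)
    from zs have "0 < (\<Sum>c\<in>\<Sigma>0. w c * violation S (asg (xs @ [y, z])) c)"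
      by (rule pos)
    then show "0 < A xs y + (\<Sum>c\<in>\<Sigma>0 - \<Sigma> - {?a}. w c * violation S (asg (xs @ [z, z])) c) +
        (if ?a \<in> \<Sigma>0 then w ?a else 0) * (\<epsilon> - mdist S y z)"
      unfolding A_def doubled_combination_split[OF fin sub vars len] .
  qed
qed

section \<open>Approximating the distance to the graph\<close>

lemma INF_approximates_dist_to_graph:
  fixes A R :: "'x \<Rightarrow> 'y \<Rightarrow> real" and d :: "'y \<Rightarrow> 'y \<Rightarrow> real"
  assumes "Metric_space Y d" and "X \<noteq> {}" and f: "\<And>x. x \<in> X \<Longrightarrow> f x \<in> Y" and "0 \<le> c"
    and A: "\<And>x. x \<in> X \<Longrightarrow> A x (f x) \<le> 0" and R: "\<And>x. x \<in> X \<Longrightarrow> R x (f x) \<le> 0"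
    and sep: "\<And>x y z. x \<in> X \<Longrightarrow> y \<in> Y \<Longrightarrow> z \<in> Y \<Longrightarrow> 0 < A x y + R x z + c * (\<epsilon> - d y z)"
  shows "0 < c" and "\<And>x y. x \<in> X \<Longrightarrow> y \<in> Y \<Longrightarrow> \<bar>(INF z\<in>Y. R x z / c + d z y) - d (f x) y\<bar> \<le> \<epsilon>"
proof -
  interpret Metric_space Y d by fact
  show "0 < c"
  proof (rule ccontr)
    assume "\<not> 0 < c"
    then have "c = 0" using \<open>0 \<le> c\<close> by simp
    obtain x where x: "x \<in> X" using \<open>X \<noteq> {}\<close> by blast
    show False
      using sep[OF x f[OF x] f[OF x]] A[OF x] R[OF x] \<open>c = 0\<close> by simp
  qed
  fix x y assume x: "x \<in> X" and y: "y \<in> Y"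
  define T where "T z = R x z / c + d z y" for z
  have lower: "d (f x) y - \<epsilon> \<le> T z" if z: "z \<in> Y" for z
  proof -
    have "c * (d (f x) z - \<epsilon>) < R x z"
      using sep[OF x f[OF x] z] A[OF x] by (simp add: algebra_simps)
    then have "d (f x) z - \<epsilon> \<le> R x z / c"
      using \<open>0 < c\<close> by (simp add: pos_le_divide_eq mult.commute)
    moreover have "d (f x) y \<le> d (f x) z + d z y"
      using triangle f[OF x] z y by blast
    ultimately show ?thesis by (simp add: T_def)
  qed
  have upper: "T (f x) \<le> d (f x) y"
    using R[OF x] \<open>0 < c\<close> by (simp add: T_def divide_nonpos_pos)
  have "bdd_below (T ` Y)"
    using lower by (rule bdd_belowI2)
  then have "(INF z\<in>Y. T z) \<le> d (f x) y"
    using f[OF x] upper by (meson cINF_lower order_trans)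
  moreover have "d (f x) y - \<epsilon> \<le> (INF z\<in>Y. T z)"
    using f[OF x] lower by (intro cINF_greatest) auto
  ultimately show "\<bar>(INF z\<in>Y. R x z / c + d z y) - d (f x) y\<bar> \<le> \<epsilon>"
    by (simp add: T_def)
qed

fun weighted_sum :: "(('f, 'r) condition \<Rightarrow> real) \<Rightarrow> ('f, 'r) condition list \<Rightarrow> ('f, 'r) aformula" where
  "weighted_sum w [] = Scale 0 One"
| "weighted_sum w (c # cs) = Add (Scale (w c) (Add (fst c) (Scale (-1) (snd c)))) (weighted_sum w cs)"

lemma feval_weighted_sum: "feval S \<sigma> (weighted_sum w cs) = (\<Sum>c\<leftarrow>cs. w c * violation S \<sigma> c)"
  by (induction cs) (simp_all add: violation_def)

lemma fv_weighted_sum: "fv (weighted_sum w cs) \<subseteq> (\<Union>c\<in>set cs. cond_vars c)"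
  by (induction cs) (auto simp: cond_vars_def)

lemma wf_weighted_sum:
  "\<forall>c\<in>set cs. wf_formula fa ra (fst c) \<and> wf_formula fa ra (snd c) \<Longrightarrow>
    wf_formula fa ra (weighted_sum w cs)"
  by (induction cs) auto

lemma weighted_sum_formula:
  assumes "finite C" "\<forall>c\<in>C. wf_formula fa ra (fst c) \<and> wf_formula fa ra (snd c)"
  obtains \<rho> where "wf_formula fa ra \<rho>" "fv \<rho> \<subseteq> (\<Union>c\<in>C. cond_vars c)"
    "\<And>\<sigma>. feval S \<sigma> \<rho> = (\<Sum>c\<in>C. w c * violation S \<sigma> c)"
proof -
  obtain cs where "set cs = C" "distinct cs"
    using finite_distinct_list[OF assms(1)] by blast
  then show ?thesis
    using assms(2) fv_weighted_sum[of w cs]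
    by (intro that[of "weighted_sum w cs"])
      (simp_all add: wf_weighted_sum feval_weighted_sum sum_list_distinct_conv_sum_set)
qed

lemma swapped_combination_formula:
  assumes fin: "finite C" and C: "C \<subseteq> rename_cond (Transposition.transpose n (Suc n)) ` \<Sigma>"
    and wf: "\<forall>c\<in>\<Sigma>. wf_condition fa ra (Suc n) c"
  obtains \<rho> where "wf_formula fa ra \<rho>" "fv \<rho> \<subseteq> insert (Suc n) {..<n}"
    "\<And>\<sigma>. feval S \<sigma> \<rho> = (\<Sum>c\<in>C. w c * violation S \<sigma> c)"
proof -
  have C_props: "wf_formula fa ra (fst c) \<and> wf_formula fa ra (snd c) \<and>
      cond_vars c \<subseteq> insert (Suc n) {..<n}" if c: "c \<in> C" for c
  proof -
    obtain d where d: "d \<in> \<Sigma>" "c = rename_cond (Transposition.transpose n (Suc n)) d"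
      using C c by blast
    then have "wf_condition fa ra (Suc n) d"
      using wf by blast
    with d show ?thesis
      using cond_vars_swapped[of d n] by (simp add: wf_condition_iff rename_cond_def wf_rename_formula)
  qed
  then have wf_C: "\<forall>c\<in>C. wf_formula fa ra (fst c) \<and> wf_formula fa ra (snd c)"
    and vars_C: "\<forall>c\<in>C. cond_vars c \<subseteq> insert (Suc n) {..<n}"
    by simp_all
  obtain \<rho> where "wf_formula fa ra \<rho>" "fv \<rho> \<subseteq> (\<Union>c\<in>C. cond_vars c)"
    "\<And>\<sigma>. feval S \<sigma> \<rho> = (\<Sum>c\<in>C. w c * violation S \<sigma> c)"
    by (rule weighted_sum_formula[OF fin wf_C, where S = S and w = w]) blast
  with vars_C show ?thesis
    using that by blast
qed

lemma feval_INF_formula: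
  assumes "fv \<rho> \<subseteq> insert (Suc n) {..<n}" "length xs = n"
  shows "feval S (asg (xs @ [y])) (Inf (Suc n) (Add (Scale r \<rho>) (Dist (Var (Suc n)) (Var n)))) =
    (INF z\<in>univ S. r * feval S (asg (xs @ [z, z])) \<rho> + mdist S z y)"
proof -
  have "feval S ((asg (xs @ [y]))(Suc n := z)) \<rho> = feval S (asg (xs @ [z, z])) \<rho>" for z
    using assms by (intro feval_cong) (auto simp: asg_def nth_append)
  then show ?thesis
    using assms(2) by (simp add: asg_def nth_append)
qed

lemma graph_separating_formula:
  assumes S: "is_structure fa ra S" and sat: "aleph0_saturated fa ra S"
    and f: "\<forall>xs\<in>tuples S n. f xs \<in> univ S"
    and wf: "\<forall>c\<in>\<Sigma>. wf_condition fa ra (Suc n) c"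
    and graph: "solutions S (Suc n) \<Sigma> = {xs @ [f xs] | xs. xs \<in> tuples S n}"
    and "0 < \<epsilon>"
  obtains A \<rho> c0 where "wf_formula fa ra \<rho>" "fv \<rho> \<subseteq> insert (Suc n) {..<n}" "0 \<le> c0"
    "\<And>xs. xs \<in> tuples S n \<Longrightarrow> A xs (f xs) \<le> 0"
    "\<And>xs. xs \<in> tuples S n \<Longrightarrow> feval S (asg (xs @ [f xs, f xs])) \<rho> \<le> 0"
    "\<And>xs y z. xs \<in> tuples S n \<Longrightarrow> y \<in> univ S \<Longrightarrow> z \<in> univ S \<Longrightarrow>
       0 < A xs y + feval S (asg (xs @ [z, z])) \<rho> + c0 * (\<epsilon> - mdist S y z)"
proof -
  obtain A C w c0 where fin: "finite C"
    and C: "C \<subseteq> rename_cond (Transposition.transpose n (Suc n)) ` \<Sigma>" and w: "\<forall>c\<in>C. 0 \<le> w c"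
    and "0 \<le> c0" and A_graph: "\<And>xs. xs \<in> tuples S n \<Longrightarrow> A xs (f xs) \<le> 0"
    and sep: "\<And>xs y z. xs \<in> tuples S n \<Longrightarrow> y \<in> univ S \<Longrightarrow> z \<in> univ S \<Longrightarrow>
       0 < A xs y + (\<Sum>c\<in>C. w c * violation S (asg (xs @ [z, z])) c) + c0 * (\<epsilon> - mdist S y z)"
    by (rule graph_separation[OF S sat wf graph \<open>0 < \<epsilon>\<close>]) blast
  obtain \<rho> where wf_\<rho>: "wf_formula fa ra \<rho>" and fv_\<rho>: "fv \<rho> \<subseteq> insert (Suc n) {..<n}"
    and feval_\<rho>: "\<And>\<sigma>. feval S \<sigma> \<rho> = (\<Sum>c\<in>C. w c * violation S \<sigma> c)"
    by (rule swapped_combination_formula[OF fin C wf, where S = S and w = w]) blast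
  have R_graph: "feval S (asg (xs @ [f xs, f xs])) \<rho> \<le> 0" if xs: "xs \<in> tuples S n" for xs
  proof -
    have "\<forall>c\<in>\<Sigma>. cond_vars c \<subseteq> {..<Suc n}"
      using wf by (simp add: wf_condition_iff)
    then have "\<forall>c\<in>doubled_conditions n \<Sigma>. violation S (asg (xs @ [f xs, f xs])) c \<le> 0"
      using doubled_graph_solution_iff[OF graph _ xs] f xs by simp
    then show ?thesis
      unfolding feval_\<rho> using C w
      by (intro sum_nonpos mult_nonneg_nonpos) (auto simp: doubled_conditions_def)
  qed
  show ?thesis
  proof (rule that[of \<rho> c0 A, OF wf_\<rho> fv_\<rho> \<open>0 \<le> c0\<close> A_graph R_graph])
    show "0 < A xs y + feval S (asg (xs @ [z, z])) \<rho> + c0 * (\<epsilon> - mdist S y z)"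
      if "xs \<in> tuples S n" "y \<in> univ S" "z \<in> univ S" for xs y z
      using sep[OF that] by (simp only: feval_\<rho>)
  qed
qed

lemma graph_dist_approximable:
  assumes S: "is_structure fa ra S" and sat: "aleph0_saturated fa ra S"
    and f: "\<forall>xs\<in>tuples S n. f xs \<in> univ S"
    and wf: "\<forall>c\<in>\<Sigma>. wf_condition fa ra (Suc n) c"
    and graph: "solutions S (Suc n) \<Sigma> = {xs @ [f xs] | xs. xs \<in> tuples S n}"
    and "0 < \<epsilon>"
  shows "\<exists>\<theta>. wf_formula fa ra \<theta> \<and> fv \<theta> \<subseteq> {..<Suc n} \<and>
    (\<forall>zs\<in>tuples S (Suc n). \<bar>feval S (asg zs) \<theta> - mdist S (f (take n zs)) (zs ! n)\<bar> \<le> \<epsilon>)"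
proof -
  obtain A \<rho> c0 where wf_\<rho>: "wf_formula fa ra \<rho>" and fv_\<rho>: "fv \<rho> \<subseteq> insert (Suc n) {..<n}"
    and "0 \<le> c0" and A_graph: "\<And>xs. xs \<in> tuples S n \<Longrightarrow> A xs (f xs) \<le> 0"
    and R_graph: "\<And>xs. xs \<in> tuples S n \<Longrightarrow> feval S (asg (xs @ [f xs, f xs])) \<rho> \<le> 0"
    and sep: "\<And>xs y z. xs \<in> tuples S n \<Longrightarrow> y \<in> univ S \<Longrightarrow> z \<in> univ S \<Longrightarrow>
       0 < A xs y + feval S (asg (xs @ [z, z])) \<rho> + c0 * (\<epsilon> - mdist S y z)"
    by (rule graph_separating_formula[OF S sat f wf graph \<open>0 < \<epsilon>\<close>]) blast
  note approx = INF_approximates_dist_to_graph[where X = "tuples S n" and f = f and A = A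
      and R = "\<lambda>xs z. feval S (asg (xs @ [z, z])) \<rho>", OF structure_metric[OF S]
      tuples_nonempty[OF structure_univ_nonempty[OF S]] f[rule_format] \<open>0 \<le> c0\<close> A_graph R_graph sep]
  define \<theta> where "\<theta> = Inf (Suc n) (Add (Scale (1 / c0) \<rho>) (Dist (Var (Suc n)) (Var n)))"
  have "\<bar>feval S (asg zs) \<theta> - mdist S (f (take n zs)) (zs ! n)\<bar> \<le> \<epsilon>"
    if zs_tuple: "zs \<in> tuples S (Suc n)" for zs
  proof -
    obtain xs y where zs: "zs = xs @ [y]" and xs: "xs \<in> tuples S n" and y: "y \<in> univ S"
      using zs_tuple unfolding tuples_Suc by blast
    then have len: "length xs = n"
      by (simp add: tuples_def)
    then have "feval S (asg zs) \<theta> =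
        (INF z\<in>univ S. 1 / c0 * feval S (asg (xs @ [z, z])) \<rho> + mdist S z y)"
      unfolding \<theta>_def zs by (rule feval_INF_formula[OF fv_\<rho>])
    then show ?thesis
      using approx(2) xs y len by (auto simp: zs)
  qed
  moreover have "fv \<theta> \<subseteq> {..<Suc n}"
    using fv_\<rho> by (auto simp: \<theta>_def)
  moreover have "wf_formula fa ra \<theta>"
    using wf_\<rho> by (simp add: \<theta>_def)
  ultimately show ?thesis
    by blast
qed

lemma definable_predI:
  assumes "\<And>\<epsilon>. 0 < \<epsilon> \<Longrightarrow> \<exists>\<phi>. wf_formula fa ra \<phi> \<and> fv \<phi> \<subseteq> {..<m} \<and>
    (\<forall>xs\<in>tuples S m. \<bar>feval S (asg xs) \<phi> - P xs\<bar> \<le> \<epsilon>)"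
  shows "definable_pred fa ra S m P"
proof -
  define good where "good \<epsilon> \<phi> \<longleftrightarrow> wf_formula fa ra \<phi> \<and> fv \<phi> \<subseteq> {..<m} \<and>
    (\<forall>xs\<in>tuples S m. \<bar>feval S (asg xs) \<phi> - P xs\<bar> \<le> \<epsilon>)" for \<epsilon> \<phi>
  define \<phi>s where "\<phi>s k = (SOME \<phi>. good (1 / Suc k) \<phi>)" for k
  have \<phi>s: "good (1 / Suc k) (\<phi>s k)" for k
    unfolding \<phi>s_def good_def by (rule someI_ex) (rule assms, simp)
  have "\<exists>N. \<forall>k\<ge>N. \<forall>xs\<in>tuples S m. \<bar>feval S (asg xs) (\<phi>s k) - P xs\<bar> \<le> \<epsilon>" if \<epsilon>: "0 < \<epsilon>" for \<epsilon>
  proof -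
    obtain N where N: "inverse (real (Suc N)) < \<epsilon>"
      using reals_Archimedean[OF \<epsilon>] by blast
    have "1 / real (Suc k) \<le> \<epsilon>" if "N \<le> k" for k
    proof -
      have "1 / real (Suc k) \<le> 1 / real (Suc N)"
        using that by (simp add: frac_le)
      then show ?thesis
        using N by (simp add: inverse_eq_divide)
    qed
    then show ?thesis
      using \<phi>s unfolding good_def by (meson order_trans)
  qed
  then show ?thesis
    unfolding definable_pred_def using \<phi>s good_def by blast
qed

lemma type_definable_zero_set:
  fixes fa :: "'f \<Rightarrow> nat" and ra :: "'r \<Rightarrow> nat"
  assumes def: "definable_pred fa ra S m P" and nonneg: "\<forall>xs\<in>tuples S m. 0 \<le> P xs"
  shows "type_definable fa ra S m {xs \<in> tuples S m. P xs = 0}"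
proof -
  obtain \<phi>s :: "nat \<Rightarrow> ('f, 'r) aformula" where wf: "\<forall>k. wf_formula fa ra (\<phi>s k) \<and> fv (\<phi>s k) \<subseteq> {..<m}"
    and conv: "\<forall>\<epsilon>>0. \<exists>N. \<forall>k\<ge>N. \<forall>xs\<in>tuples S m. \<bar>feval S (asg xs) (\<phi>s k) - P xs\<bar> \<le> \<epsilon>"
    using def unfolding definable_pred_def by blast
  define \<Sigma> :: "('f, 'r) condition set" where "\<Sigma> = {(\<phi>s k, Scale \<delta> One) | k \<delta>.
    0 < \<delta> \<and> (\<forall>xs\<in>tuples S m. \<bar>feval S (asg xs) (\<phi>s k) - P xs\<bar> \<le> \<delta>)}"
  have "\<forall>c\<in>\<Sigma>. wf_condition fa ra m c"
    using wf by (auto simp: \<Sigma>_def wf_condition_def)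
  moreover have "{xs \<in> tuples S m. P xs = 0} = solutions S m \<Sigma>"
  proof (intro equalityI subsetI)
    fix xs assume "xs \<in> {xs \<in> tuples S m. P xs = 0}"
    then show "xs \<in> solutions S m \<Sigma>"
      by (fastforce simp: \<Sigma>_def solutions_def violation_def abs_le_iff)
  next
    fix xs assume sol: "xs \<in> solutions S m \<Sigma>"
    then have xs: "xs \<in> tuples S m" by (simp add: solutions_def)
    have "P xs \<le> 0 + e" if "0 < e" for e
    proof -
      obtain k where k: "\<forall>xs\<in>tuples S m. \<bar>feval S (asg xs) (\<phi>s k) - P xs\<bar> \<le> e / 2"
        using conv \<open>0 < e\<close> by (meson half_gt_zero order_refl)
      moreover have "0 < e / 2"
        using \<open>0 < e\<close> by simp
      ultimately have "(\<phi>s k, Scale (e / 2) One) \<in> \<Sigma>"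
        unfolding \<Sigma>_def by blast
      then have "feval S (asg xs) (\<phi>s k) \<le> e / 2"
        using sol by (fastforce simp: solutions_def violation_def)
      moreover have "- (feval S (asg xs) (\<phi>s k) - P xs) \<le> e / 2"
        using k xs by (blast intro: abs_le_D2)
      ultimately show ?thesis
        by linarith
    qed
    then have "P xs = 0"
      using field_le_epsilon nonneg xs by (meson order_antisym)
    then show "xs \<in> {xs \<in> tuples S m. P xs = 0}"
      using xs by simp
  qed
  ultimately show ?thesis
    unfolding type_definable_iff_solutions by blast
qed

lemma graph_eq_dist_zero_set:
  assumes ms: "Metric_space (univ S) (mdist S)" and f: "\<forall>xs\<in>tuples S n. f xs \<in> univ S"
  shows "{xs @ [f xs] | xs. xs \<in> tuples S n} =
    {zs \<in> tuples S (Suc n). mdist S (f (take n zs)) (zs ! n) = 0}"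
proof -
  have "mdist S (f (take n (xs @ [y]))) ((xs @ [y]) ! n) = 0 \<longleftrightarrow> y = f xs"
    if "xs \<in> tuples S n" "y \<in> univ S" for xs y
    using that f Metric_space.zero[OF ms] by (auto simp: tuples_def)
  then show ?thesis
    unfolding tuples_Suc using f by blast
qed

theorem mainTheorem13:
  fixes fa :: "'f \<Rightarrow> nat" and ra :: "'r \<Rightarrow> nat"
    and S :: "('f, 'r, 'a) lstruct" and n :: nat and f :: "'a list \<Rightarrow> 'a"
  assumes "is_structure fa ra S"
    and "aleph0_saturated fa ra S"
    and "\<forall>xs\<in>tuples S n. f xs \<in> univ S"
  shows "definable_fun fa ra S n f \<longleftrightarrow>
         type_definable fa ra S (Suc n) {xs @ [f xs] | xs. xs \<in> tuples S n}"
proof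
  have ms: "Metric_space (univ S) (mdist S)"
    using assms(1) by (rule structure_metric)
  assume "definable_fun fa ra S n f"
  then show "type_definable fa ra S (Suc n) {xs @ [f xs] | xs. xs \<in> tuples S n}"
    unfolding definable_fun_def graph_eq_dist_zero_set[OF ms assms(3)]
    by (rule type_definable_zero_set) (simp add: Metric_space.nonneg[OF ms])
next
  assume "type_definable fa ra S (Suc n) {xs @ [f xs] | xs. xs \<in> tuples S n}"
  then obtain \<Sigma> where wf: "\<forall>c\<in>\<Sigma>. wf_condition fa ra (Suc n) c"
    and graph: "solutions S (Suc n) \<Sigma> = {xs @ [f xs] | xs. xs \<in> tuples S n}"
    unfolding type_definable_iff_solutions by auto
  show "definable_fun fa ra S n f"
    unfolding definable_fun_def
    using graph_dist_approximable[OF assms wf graph] by (rule definable_predI)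
qed

end
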